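(* Let $g\colon\Sigma_0\to\Sigma_1$ be a strict morphism of connected labeled graphs that induces a surjection on fundamental groups. Suppose that for some $b\in\mathcal B$ the number of edges of $\Sigma_1$ labeled $b^{\pm1}$ is less than the number of edges of $\Sigma_0$ labeled $b^{\pm1}$. Then there are an immersed edge path $\sigma\colon I\to\Sigma_0$, given by $e_0e_1\cdots e_m$, a labeled tree $T$, and strict morphisms $g'\colon I\to T$ and $T\to\Sigma_1$ such that $g\circ\sigma$ equals the composite $I\to T\to\Sigma_1$, $e_0$ and $e_m^{-1}$ carry the same label $b'\in\{b,b^{-1}\}$, no $e_i$ with $0<i<m$ is labeled $b^{\pm1}$, and $g'$ maps the first edge and the inverse of the last edge of $I$ to the same edge of $T$.
   Context: Labeled graphs have oriented edges labeled in $\mathcal B^{\pm1}$ ($\mathcal B$ a finite set), with $e^{-1}$ carrying the inverse label. A map of labeled graphs is a morphism if it preserves labels and orientations and its lift to universal covers is a simplicial map of trees; it is strict if no edge is mapped to a point. An edge path is a strict morphism from an oriented subdivided compact interval $I$, identified with its sequence of oriented edges $e_0\cdots e_m$; it is immersed if no $e_i=e_{i-1}^{-1}$. *)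

theory Defs
  imports Main
begin

text \<open>A labeled graph: vertex set, set of oriented edges, source map, edge inversion
  (fixed-point free involution), and labels in B^{+-1}: a label is a pair (b, s) with
  s = True meaning b and s = False meaning b^{-1}.\<close>

record ('v, 'e, 'b) lgraph =
  verts :: "'v set"
  edges :: "'e set"
  src   :: "'e \<Rightarrow> 'v"
  einv  :: "'e \<Rightarrow> 'e"
  lab   :: "'e \<Rightarrow> 'b \<times> bool"

definition tgt :: "('v, 'e, 'b) lgraph \<Rightarrow> 'e \<Rightarrow> 'v" where
  "tgt G e = src G (einv G e)"

definition inv_label :: "'b \<times> bool \<Rightarrow> 'b \<times> bool" where
  "inv_label l = (fst l, \<not> snd l)"

definition wf_lgraph :: "('v, 'e, 'b) lgraph \<Rightarrow> bool" where
  "wf_lgraph G \<longleftrightarrow>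
     (\<forall>e \<in> edges G. src G e \<in> verts G \<and> einv G e \<in> edges G \<and>
        einv G (einv G e) = e \<and> einv G e \<noteq> e \<and>
        lab G (einv G e) = inv_label (lab G e))"

fun is_path :: "('v, 'e, 'b) lgraph \<Rightarrow> 'v \<Rightarrow> 'e list \<Rightarrow> 'v \<Rightarrow> bool" where
  "is_path G v [] w \<longleftrightarrow> v = w \<and> v \<in> verts G"
| "is_path G v (e # es) w \<longleftrightarrow> e \<in> edges G \<and> src G e = v \<and> is_path G (tgt G e) es w"

definition connected_lg :: "('v, 'e, 'b) lgraph \<Rightarrow> bool" where
  "connected_lg G \<longleftrightarrow> verts G \<noteq> {} \<and> (\<forall>u \<in> verts G. \<forall>v \<in> verts G. \<exists>p. is_path G u p v)"

definition immersed :: "('v, 'e, 'b) lgraph \<Rightarrow> 'e list \<Rightarrow> bool" where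
  "immersed G p \<longleftrightarrow> (\<forall>i. Suc i < length p \<longrightarrow> p ! Suc i \<noteq> einv G (p ! i))"

definition is_tree :: "('v, 'e, 'b) lgraph \<Rightarrow> bool" where
  "is_tree G \<longleftrightarrow> wf_lgraph G \<and> connected_lg G \<and>
     (\<forall>v p. is_path G v p v \<and> immersed G p \<longrightarrow> p = [])"

definition backtrack_step :: "('v, 'e, 'b) lgraph \<Rightarrow> 'e list \<Rightarrow> 'e list \<Rightarrow> bool" where
  "backtrack_step G p q \<longleftrightarrow> (\<exists>xs e ys. p = xs @ [e, einv G e] @ ys \<and> q = xs @ ys)"

definition homotopic :: "('v, 'e, 'b) lgraph \<Rightarrow> 'e list \<Rightarrow> 'e list \<Rightarrow> bool" where
  "homotopic G = (\<lambda>p q. backtrack_step G p q \<or> backtrack_step G q p)\<^sup>*\<^sup>*"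

definition strict_morphism ::
  "('v, 'e, 'b) lgraph \<Rightarrow> ('w, 'f, 'b) lgraph \<Rightarrow> ('v \<Rightarrow> 'w) \<times> ('e \<Rightarrow> 'f) \<Rightarrow> bool" where
  "strict_morphism G H f \<longleftrightarrow>
     (\<forall>v \<in> verts G. fst f v \<in> verts H) \<and>
     (\<forall>e \<in> edges G. snd f e \<in> edges H \<and> src H (snd f e) = fst f (src G e) \<and>
        snd f (einv G e) = einv H (snd f e) \<and> lab H (snd f e) = lab G e)"

text \<open>Surjectivity on fundamental groups at base vertex v0 (for connected graphs
  independent of v0): every closed path at f(v0) is homotopic to the image of a
  closed path at v0.\<close>

definition pi1_surjective ::
  "('v, 'e, 'b) lgraph \<Rightarrow> ('w, 'f, 'b) lgraph \<Rightarrow> ('v \<Rightarrow> 'w) \<times> ('e \<Rightarrow> 'f) \<Rightarrow> 'v \<Rightarrow> bool" where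
  "pi1_surjective G H f v0 \<longleftrightarrow>
     (\<forall>q. is_path H (fst f v0) q (fst f v0) \<longrightarrow>
        (\<exists>p. is_path G v0 p v0 \<and> homotopic H (map (snd f) p) q))"

text \<open>The interval with m+1 edges: vertices 0..m+1, forward edge (i,True) from i to i+1
  with label L i, backward edge (i,False) its inverse.\<close>

definition interval_graph :: "nat \<Rightarrow> (nat \<Rightarrow> 'b \<times> bool) \<Rightarrow> (nat, nat \<times> bool, 'b) lgraph" where
  "interval_graph m L =
     \<lparr> verts = {0..Suc m},
       edges = {(i, d). i \<le> m},
       src = (\<lambda>(i, d). if d then i else Suc i),
       einv = (\<lambda>(i, d). (i, \<not> d)),
       lab = (\<lambda>(i, d). if d then L i else inv_label (L i)) \<rparr>"

text \<open>Number of (geometric) edges labeled b^{+-1} = number of oriented edges labeled b.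
  "Fewer" is taken in the sense of cardinality: no injection from B into A.\<close>

definition b_edges :: "('v, 'e, 'b) lgraph \<Rightarrow> 'b \<Rightarrow> 'e set" where
  "b_edges G b = {e \<in> edges G. lab G e = (b, True)}"

definition card_less :: "'a set \<Rightarrow> 'c set \<Rightarrow> bool" where
  "card_less A B \<longleftrightarrow> \<not> (\<exists>f. inj_on f B \<and> f ` B \<subseteq> A)"

end

theory Submission
  imports Defs
begin

text \<open>As \<open>g\<close> is not injective on \<open>b\<close>-edges, two \<open>b\<close>-edges \<open>e \<noteq> e'\<close> have the same image. Joining
  their ends by a path and correcting it by a loop, which \<open>\<pi>\<^sub>1\<close>-surjectivity provides, gives a
  path \<open>x w e'\<inverse>\<close> with \<open>x = e\<close> whose middle part \<open>w\<close> has null-homotopic image: a cancelling arc.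
  A shortest cancelling arc is immersed and has no \<open>b\<^sup>\<plusminus>\<^sup>1\<close>-edges inside: otherwise a backtrack,
  or an innermost pair of cancelling \<open>b\<^sup>\<plusminus>\<^sup>1\<close>-letters in the free reduction of the image of
  \<open>w\<close>, yields a shorter one. Finally the lift of the image of the arc to the universal cover of
  \<open>\<Sigma>\<^sub>1\<close> spans the tree \<open>T\<close>; since the middle part reduces to the empty word, the first edge
  and the inverted last edge have the same lift. Free reduction is computed on a stack, and the
  tree is built from the reduced prefixes of the image.\<close>

section \<open>Edge paths\<close>

lemma wf_lgraphD:
  assumes "wf_lgraph G" "e \<in> edges G"
  shows "src G e \<in> verts G" "einv G e \<in> edges G" "einv G (einv G e) = e" "einv G e \<noteq> e"
    "lab G (einv G e) = inv_label (lab G e)"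
  using assms unfolding wf_lgraph_def by auto

lemma inv_label_inv_label [simp]: "inv_label (inv_label l) = l"
  by (simp add: inv_label_def)

lemma fst_inv_label [simp]: "fst (inv_label l) = fst l"
  by (simp add: inv_label_def)

lemma tgt_in_verts: "wf_lgraph G \<Longrightarrow> e \<in> edges G \<Longrightarrow> tgt G e \<in> verts G"
  by (auto simp: tgt_def dest: wf_lgraphD)

lemma tgt_einv: "wf_lgraph G \<Longrightarrow> e \<in> edges G \<Longrightarrow> tgt G (einv G e) = src G e"
  by (simp add: tgt_def wf_lgraphD)

lemma is_path_in_edges: "is_path G u p v \<Longrightarrow> set p \<subseteq> edges G"
  by (induction p arbitrary: u) auto

lemma is_path_end_in_verts: "is_path G u p v \<Longrightarrow> v \<in> verts G"
  by (induction p arbitrary: u) auto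

lemma is_path_start_in_verts: "wf_lgraph G \<Longrightarrow> is_path G u p v \<Longrightarrow> u \<in> verts G"
  by (cases p) (auto dest: wf_lgraphD)

lemma is_path_append:
  "wf_lgraph G \<Longrightarrow> is_path G u (xs @ ys) v \<longleftrightarrow> (\<exists>w. is_path G u xs w \<and> is_path G w ys v)"
  by (induction xs arbitrary: u) (auto intro: is_path_start_in_verts)

lemma is_path_nth_tgt_src:
  "is_path G u p v \<Longrightarrow> Suc i < length p \<Longrightarrow> src G (p ! Suc i) = tgt G (p ! i)"
proof (induction p arbitrary: u i)
  case (Cons e p)
  then show ?case by (cases i; cases p) auto
qed simp

lemma is_path_drop_loop:
  assumes wf: "wf_lgraph G" and p: "is_path G u (A @ (e # B @ [einv G e]) @ C) v"
  shows "is_path G u (A @ C) v"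
proof -
  obtain a where A: "is_path G u A a" and "is_path G a ((e # B @ [einv G e]) @ C) v"
    using p is_path_append[OF wf] by blast
  then obtain c where loop: "is_path G a (e # B @ [einv G e]) c" and C: "is_path G c C v"
    using is_path_append[OF wf] by blast
  have e: "e \<in> edges G" "src G e = a"
    using loop by auto
  have "c = tgt G (einv G e)"
    using loop by (auto simp: is_path_append[OF wf])
  also have "\<dots> = a"
    using tgt_einv[OF wf e(1)] e(2) by simp
  finally show ?thesis
    using A C by (auto simp: is_path_append[OF wf])
qed

definition rev_path :: "('v, 'e, 'b) lgraph \<Rightarrow> 'e list \<Rightarrow> 'e list" where
  "rev_path G p = rev (map (einv G) p)"

lemma rev_path_simps [simp]:
  "rev_path G [] = []"
  "rev_path G (e # p) = rev_path G p @ [einv G e]"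
  "rev_path G (p @ q) = rev_path G q @ rev_path G p"
  by (auto simp: rev_path_def)

lemma rev_path_in_edges: "wf_lgraph G \<Longrightarrow> set p \<subseteq> edges G \<Longrightarrow> set (rev_path G p) \<subseteq> edges G"
  by (auto simp: rev_path_def dest: wf_lgraphD(2))

lemma rev_path_rev_path: "wf_lgraph G \<Longrightarrow> set p \<subseteq> edges G \<Longrightarrow> rev_path G (rev_path G p) = p"
  by (induction p) (auto dest: wf_lgraphD(3))

lemma is_path_rev_path:
  assumes wf: "wf_lgraph G"
  shows "is_path G u p v \<Longrightarrow> is_path G v (rev_path G p) u"
proof (induction p arbitrary: u)
  case (Cons e p)
  then have "e \<in> edges G" "is_path G v (rev_path G p) (tgt G e)" "src G e = u"
    by auto
  moreover have "is_path G (tgt G e) [einv G e] (src G e)"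
    using \<open>e \<in> edges G\<close> wf_lgraphD[OF wf] by (auto simp: tgt_def)
  ultimately show ?case
    by (auto simp: is_path_append[OF wf])
qed simp

definition path_end :: "('v, 'e, 'b) lgraph \<Rightarrow> 'v \<Rightarrow> 'e list \<Rightarrow> 'v" where
  "path_end G u p = (if p = [] then u else tgt G (last p))"

lemma is_path_path_end: "is_path G u p v \<Longrightarrow> v = path_end G u p"
proof (induction p arbitrary: u)
  case (Cons e p)
  then show ?case by (cases p) (auto simp: path_end_def)
qed (simp add: path_end_def)

lemma is_path_take:
  assumes "wf_lgraph G" "is_path G u p v"
  shows "is_path G u (take k p) (path_end G u (take k p))"
proof -
  have "is_path G u (take k p @ drop k p) v"
    using assms(2) by simp
  then show ?thesis
    using is_path_path_end by (metis assms(1) is_path_append)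
qed

lemma src_nth_path_end:
  assumes wf: "wf_lgraph G" and p: "is_path G u p v" and k: "k < length p"
  shows "src G (p ! k) = path_end G u (take k p)"
proof -
  have "is_path G u (take k p @ [p ! k]) (path_end G u (take (Suc k) p))"
    using is_path_take[OF wf p, of "Suc k"] k by (simp add: take_Suc_conv_app_nth)
  then show ?thesis
    using is_path_path_end by (fastforce simp: is_path_append[OF wf])
qed

lemma tgt_nth_path_end: "k < length p \<Longrightarrow> tgt G (p ! k) = path_end G u (take (Suc k) p)"
  by (simp add: path_end_def take_Suc_conv_app_nth)

lemma immersed_Cons:
  "immersed G (e # p) \<longleftrightarrow> immersed G p \<and> (p \<noteq> [] \<longrightarrow> hd p \<noteq> einv G e)"
  unfolding immersed_def by (cases p) (auto simp: nth_Cons split: nat.splits)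

lemma immersed_snoc:
  "immersed G (p @ [e]) \<longleftrightarrow> immersed G p \<and> (p \<noteq> [] \<longrightarrow> e \<noteq> einv G (last p))"
proof (induction p)
  case (Cons a p)
  then show ?case by (cases p) (auto simp: immersed_Cons)
qed (simp add: immersed_def)

lemma immersed_butlast: "immersed G p \<Longrightarrow> immersed G (butlast p)"
  by (cases p rule: rev_cases) (auto simp: immersed_snoc)

lemma not_immersed_backtrack:
  assumes "\<not> immersed G p"
  obtains A e C where "p = A @ [e, einv G e] @ C"
proof -
  obtain i where i: "Suc i < length p" "p ! Suc i = einv G (p ! i)"
    using assms unfolding immersed_def by blast
  then have "p = take i p @ [p ! i, p ! Suc i] @ drop (Suc (Suc i)) p"
    by (metis Cons_nth_drop_Suc Suc_lessD append_Cons append_Nil append_take_drop_id)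
  then show thesis
    using that i(2) by metis
qed

section \<open>Strict morphisms\<close>

lemma strict_morphism_edgeD:
  assumes "strict_morphism G H f" "e \<in> edges G"
  shows "snd f e \<in> edges H" "src H (snd f e) = fst f (src G e)"
    "snd f (einv G e) = einv H (snd f e)" "lab H (snd f e) = lab G e"
  using assms unfolding strict_morphism_def by auto

lemma strict_morphism_tgt:
  "wf_lgraph G \<Longrightarrow> strict_morphism G H f \<Longrightarrow> e \<in> edges G \<Longrightarrow> tgt H (snd f e) = fst f (tgt G e)"
  unfolding tgt_def by (metis strict_morphism_edgeD(2,3) wf_lgraphD(2))

lemma strict_morphism_is_path:
  assumes "wf_lgraph G" "strict_morphism G H f"
  shows "is_path G u p v \<Longrightarrow> is_path H (fst f u) (map (snd f) p) (fst f v)"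
proof (induction p arbitrary: u)
  case (Cons e p)
  then show ?case
    using assms strict_morphism_tgt[OF assms] by (auto simp: strict_morphism_edgeD)
qed (use assms in \<open>simp add: strict_morphism_def\<close>)

lemma strict_morphism_rev_path:
  "strict_morphism G H f \<Longrightarrow> set p \<subseteq> edges G \<Longrightarrow>
    map (snd f) (rev_path G p) = rev_path H (map (snd f) p)"
  by (induction p) (auto simp: strict_morphism_edgeD)

lemma strict_morphism_path_end:
  assumes "wf_lgraph G" "strict_morphism G H f" "is_path G u p v"
  shows "fst f (path_end G u p) = path_end H (fst f u) (map (snd f) p)"
  using is_path_path_end assms strict_morphism_is_path by metis

definition path_map :: "('v, 'e, 'b) lgraph \<Rightarrow> 'v \<Rightarrow> 'e list \<Rightarrow> (nat \<Rightarrow> 'v) \<times> (nat \<times> bool \<Rightarrow> 'e)" where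
  "path_map G u p = (\<lambda>k. path_end G u (take k p), \<lambda>(k, d). if d then p ! k else einv G (p ! k))"

lemma path_map_strict_morphism:
  assumes wf: "wf_lgraph G" and p: "is_path G u p v" and m: "Suc m = length p"
    and L: "\<forall>k\<le>m. L k = lab G (p ! k)"
  shows "strict_morphism (interval_graph m L) G (path_map G u p)"
  unfolding strict_morphism_def
proof (intro conjI ballI)
  fix x assume "x \<in> verts (interval_graph m L)"
  then have "x \<le> length p"
    using m by (simp add: interval_graph_def)
  then show "fst (path_map G u p) x \<in> verts G"
    using is_path_end_in_verts[OF is_path_take[OF wf p]] by (simp add: path_map_def)
next
  fix e assume "e \<in> edges (interval_graph m L)"
  then obtain k d where e: "e = (k, d)" and k: "k < length p" and Lk: "L k = lab G (p ! k)"
    using m L by (auto simp: interval_graph_def)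
  have pk: "p ! k \<in> edges G"
    using is_path_in_edges[OF p] k by auto
  note pk_wf = wf_lgraphD[OF wf pk]
  show "snd (path_map G u p) e \<in> edges G"
    using e pk pk_wf by (cases d) (auto simp: path_map_def)
  show "src G (snd (path_map G u p) e) = fst (path_map G u p) (src (interval_graph m L) e)"
    using e src_nth_path_end[OF wf p k] tgt_nth_path_end[OF k, of G u]
    by (cases d) (auto simp: interval_graph_def path_map_def tgt_def)
  show "snd (path_map G u p) (einv (interval_graph m L) e) = einv G (snd (path_map G u p) e)"
    using e pk_wf by (cases d) (auto simp: interval_graph_def path_map_def)
  show "lab G (snd (path_map G u p) e) = lab (interval_graph m L) e"
    using e pk_wf Lk by (cases d) (auto simp: interval_graph_def path_map_def)
qed

lemma strict_morphism_path_map: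
  assumes wf: "wf_lgraph G" and f: "strict_morphism G H f" and p: "is_path G u p v"
    and m: "Suc m = length p"
  shows "x \<in> verts (interval_graph m L) \<Longrightarrow>
      fst f (fst (path_map G u p) x) = fst (path_map H (fst f u) (map (snd f) p)) x"
    and "e \<in> edges (interval_graph m L) \<Longrightarrow>
      snd f (snd (path_map G u p) e) = snd (path_map H (fst f u) (map (snd f) p)) e"
proof -
  assume "x \<in> verts (interval_graph m L)"
  then have "x \<le> length p"
    using m by (simp add: interval_graph_def)
  then show "fst f (fst (path_map G u p) x) = fst (path_map H (fst f u) (map (snd f) p)) x"
    using strict_morphism_path_end[OF wf f is_path_take[OF wf p]] by (simp add: path_map_def take_map)
next
  assume "e \<in> edges (interval_graph m L)"
  then obtain k d where "e = (k, d)" "k < length p"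
    using m by (auto simp: interval_graph_def)
  moreover have "p ! k \<in> edges G" if "k < length p" for k
    using is_path_in_edges[OF p] that by auto
  ultimately show "snd f (snd (path_map G u p) e) = snd (path_map H (fst f u) (map (snd f) p)) e"
    using strict_morphism_edgeD[OF f] by (cases d) (auto simp: path_map_def)
qed

section \<open>Free reduction\<close>

text \<open>\<open>reduce G s xs\<close> is the free reduction of \<open>s @ xs\<close> for reduced \<open>s\<close>, computed by reading \<open>xs\<close>
  letter by letter onto the stack \<open>s\<close>.\<close>

definition push :: "('v, 'e, 'b) lgraph \<Rightarrow> 'e list \<Rightarrow> 'e \<Rightarrow> 'e list" where
  "push G s a = (if s \<noteq> [] \<and> last s = einv G a then butlast s else s @ [a])"

definition reduce :: "('v, 'e, 'b) lgraph \<Rightarrow> 'e list \<Rightarrow> 'e list \<Rightarrow> 'e list" where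
  "reduce G s xs = foldl (push G) s xs"

definition freely_reduced :: "('v, 'e, 'b) lgraph \<Rightarrow> 'e list \<Rightarrow> bool" where
  "freely_reduced G s \<longleftrightarrow> set s \<subseteq> edges G \<and> immersed G s"

lemma reduce_Nil [simp]: "reduce G s [] = s"
  by (simp add: reduce_def)

lemma reduce_Cons [simp]: "reduce G s (a # xs) = reduce G (push G s a) xs"
  by (simp add: reduce_def)

lemma reduce_append [simp]: "reduce G s (xs @ ys) = reduce G (reduce G s xs) ys"
  by (simp add: reduce_def)

lemma push_cancel: "s \<noteq> [] \<Longrightarrow> last s = einv G a \<Longrightarrow> push G s a = butlast s"
  by (simp add: push_def)

lemma push_append: "\<not> (s \<noteq> [] \<and> last s = einv G a) \<Longrightarrow> push G s a = s @ [a]"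
  unfolding push_def by (rule if_not_P)

lemma freely_reduced_Nil [simp]: "freely_reduced G []"
  by (simp add: freely_reduced_def immersed_def)

lemma freely_reduced_snoc:
  "freely_reduced G (s @ [a]) \<longleftrightarrow>
    freely_reduced G s \<and> a \<in> edges G \<and> (s \<noteq> [] \<longrightarrow> a \<noteq> einv G (last s))"
  by (auto simp: freely_reduced_def immersed_snoc)

lemma freely_reduced_butlast: "freely_reduced G s \<Longrightarrow> freely_reduced G (butlast s)"
  by (auto simp: freely_reduced_def immersed_butlast dest: in_set_butlastD)

lemma freely_reduced_push:
  assumes wf: "wf_lgraph G" and s: "freely_reduced G s" and a: "a \<in> edges G"
  shows "freely_reduced G (push G s a)"
proof (cases "s \<noteq> [] \<and> last s = einv G a")
  case True
  then show ?thesis using s by (simp add: push_cancel freely_reduced_butlast)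
next
  case False
  have "last s \<in> edges G" if "s \<noteq> []"
    using s that by (auto simp: freely_reduced_def)
  then have "s \<noteq> [] \<Longrightarrow> a \<noteq> einv G (last s)"
    using False wf_lgraphD(3)[OF wf] by metis
  then show ?thesis using False s a by (simp add: push_append freely_reduced_snoc)
qed

lemma push_push_einv:
  assumes wf: "wf_lgraph G" and s: "freely_reduced G s" and a: "a \<in> edges G"
  shows "push G (push G s a) (einv G a) = s"
proof (cases "s \<noteq> [] \<and> last s = einv G a")
  case True
  then obtain t where t: "s = t @ [einv G a]"
    by (metis append_butlast_last_id)
  then have "t \<noteq> [] \<Longrightarrow> last t \<noteq> a"
    using s by (auto simp: freely_reduced_snoc)
  then show ?thesis
    using t wf_lgraphD[OF wf a] by (auto simp: push_def)
next
  case False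
  then show ?thesis
    using wf_lgraphD[OF wf a] by (auto simp: push_def)
qed

lemma freely_reduced_reduce:
  "wf_lgraph G \<Longrightarrow> freely_reduced G s \<Longrightarrow> set xs \<subseteq> edges G \<Longrightarrow> freely_reduced G (reduce G s xs)"
  by (induction xs arbitrary: s) (auto intro: freely_reduced_push)

lemma reduce_reduce_rev_path:
  assumes wf: "wf_lgraph G"
  shows "freely_reduced G s \<Longrightarrow> set xs \<subseteq> edges G \<Longrightarrow> reduce G (reduce G s xs) (rev_path G xs) = s"
proof (induction xs arbitrary: s)
  case (Cons x xs)
  then show ?case
    using freely_reduced_push[OF wf] push_push_einv[OF wf] by simp
qed simp

lemma reduce_rev_path_reduce:
  "wf_lgraph G \<Longrightarrow> freely_reduced G s \<Longrightarrow> set xs \<subseteq> edges G \<Longrightarrow>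
    reduce G (reduce G s (rev_path G xs)) xs = s"
  using reduce_reduce_rev_path[of G s "rev_path G xs"] rev_path_in_edges rev_path_rev_path
  by metis

lemma reduce_Nil_freely_reduced:
  assumes wf: "wf_lgraph G"
  shows "freely_reduced G p \<Longrightarrow> reduce G [] p = p"
proof (induction p rule: rev_induct)
  case (snoc a p)
  have "p \<noteq> [] \<Longrightarrow> \<not> last p = einv G a"
    using snoc.prems wf_lgraphD(3)[OF wf] by (metis freely_reduced_snoc)
  then show ?case
    using snoc by (auto simp: freely_reduced_snoc push_def)
qed simp

lemma reduce_reduce_Nil:
  assumes wf: "wf_lgraph G" and s: "freely_reduced G s"
  shows "set u \<subseteq> edges G \<Longrightarrow> reduce G s u = reduce G s (reduce G [] u)"
proof (induction u rule: rev_induct)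
  case (snoc a u)
  let ?v = "reduce G [] u"
  have a: "a \<in> edges G" and IH: "reduce G s u = reduce G s ?v"
    using snoc by auto
  show ?case
  proof (cases "?v \<noteq> [] \<and> last ?v = einv G a")
    case True
    then obtain v' where v: "?v = v' @ [einv G a]"
      by (metis append_butlast_last_id)
    have "freely_reduced G ?v"
      using freely_reduced_reduce[OF wf] snoc.prems by simp
    then have "freely_reduced G (reduce G s v')"
      using freely_reduced_reduce[OF wf s] v by (simp add: freely_reduced_snoc freely_reduced_def)
    then have "push G (push G (reduce G s v') (einv G a)) a = reduce G s v'"
      using push_push_einv[OF wf _ wf_lgraphD(2)[OF wf a]] wf_lgraphD(3)[OF wf a] by metis
    then show ?thesis
      using IH v True by (simp add: push_cancel)
  next
    case False
    then show ?thesis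
      using IH by (simp add: push_append)
  qed
qed simp

lemma reduce_eq_self_imp_Nil:
  assumes wf: "wf_lgraph G" and p: "freely_reduced G p" and u: "set u \<subseteq> edges G"
    and fixed: "reduce G p u = p"
  shows "reduce G [] u = []"
proof -
  have pe: "set p \<subseteq> edges G"
    using p by (simp add: freely_reduced_def)
  define q where "q = reduce G [] (rev_path G p)"
  have q: "freely_reduced G q"
    unfolding q_def using freely_reduced_reduce[OF wf] rev_path_in_edges[OF wf pe] by simp
  have qp: "reduce G q p = []"
    unfolding q_def using reduce_rev_path_reduce[OF wf _ pe] by simp
  have "reduce G [] u = reduce G q (p @ u)"
    using qp by simp
  also have "\<dots> = reduce G q (reduce G [] (p @ u))"
    by (rule reduce_reduce_Nil[OF wf q]) (use pe u in auto)
  also have "\<dots> = []"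
    using reduce_Nil_freely_reduced[OF wf p] fixed qp by simp
  finally show ?thesis .
qed

lemma reduce_Nil_imp_eq_self:
  "wf_lgraph G \<Longrightarrow> freely_reduced G s \<Longrightarrow> set u \<subseteq> edges G \<Longrightarrow> reduce G [] u = [] \<Longrightarrow>
    reduce G s u = s"
  using reduce_reduce_Nil[of G s u] by simp

definition reduced_prefix :: "('v, 'e, 'b) lgraph \<Rightarrow> 'e list \<Rightarrow> nat \<Rightarrow> 'e list" where
  "reduced_prefix G W k = reduce G [] (take k W)"

lemma reduced_prefix_0 [simp]: "reduced_prefix G W 0 = []"
  by (simp add: reduced_prefix_def)

lemma reduced_prefix_Suc:
  "k < length W \<Longrightarrow> reduced_prefix G W (Suc k) = push G (reduced_prefix G W k) (W ! k)"
  by (simp add: reduced_prefix_def take_Suc_conv_app_nth)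

lemma reduced_prefix_segment:
  assumes "k \<le> l"
  shows "reduce G (reduced_prefix G W k) (take (l - k) (drop k W)) = reduced_prefix G W l"
proof -
  have "take l W = take k W @ take (l - k) (drop k W)"
    using assms by (metis le_add_diff_inverse take_add)
  then show ?thesis
    by (simp add: reduced_prefix_def)
qed

lemma reduce_reduced_prefix_drop: "reduce G (reduced_prefix G W k) (drop k W) = reduce G [] W"
  by (simp add: reduced_prefix_def flip: reduce_append)

lemma freely_reduced_reduced_prefix:
  "wf_lgraph G \<Longrightarrow> set W \<subseteq> edges G \<Longrightarrow> freely_reduced G (reduced_prefix G W k)"
  unfolding reduced_prefix_def
  by (rule freely_reduced_reduce) (auto dest: in_set_takeD)

lemma is_path_push:
  assumes wf: "wf_lgraph G" and s: "is_path G u s w" and a: "a \<in> edges G" "src G a = w"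
  shows "is_path G u (push G s a) (tgt G a)"
proof (cases "s \<noteq> [] \<and> last s = einv G a")
  case True
  then obtain t where t: "s = t @ [einv G a]"
    by (metis append_butlast_last_id)
  then show ?thesis
    using s True by (auto simp: push_cancel is_path_append[OF wf] tgt_def)
next
  case False
  then show ?thesis
    using s a tgt_in_verts[OF wf a(1)] by (auto simp: push_append is_path_append[OF wf])
qed

lemma is_path_reduce:
  assumes wf: "wf_lgraph G"
  shows "is_path G u s w \<Longrightarrow> is_path G w xs v \<Longrightarrow> is_path G u (reduce G s xs) v"
  by (induction xs arbitrary: s w) (auto intro: is_path_push[OF wf] simp: is_path_path_end)

section \<open>Homotopy invariance of free reduction\<close>

text \<open>Backtracks may pass through letters outside \<^term>\<open>edges G\<close>, where \<^term>\<open>einv G\<close> need not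
  be an involution. Each letter is therefore replaced by at most one edge, the first one on its
  \<^term>\<open>einv G\<close>-orbit, inverted when the distance is odd; this turns every backtrack into a
  cancelling pair of edges or into nothing.\<close>

definition edge_dist :: "('v, 'e, 'b) lgraph \<Rightarrow> 'e \<Rightarrow> nat" where
  "edge_dist G y = (LEAST k. (einv G ^^ k) y \<in> edges G)"

definition edge_proj :: "('v, 'e, 'b) lgraph \<Rightarrow> 'e \<Rightarrow> 'e list" where
  "edge_proj G y =
    (if \<exists>k. (einv G ^^ k) y \<in> edges G then
      (let a = (einv G ^^ edge_dist G y) y in if even (edge_dist G y) then [a] else [einv G a])
     else [])"

definition edge_word :: "('v, 'e, 'b) lgraph \<Rightarrow> 'e list \<Rightarrow> 'e list" where
  "edge_word G xs = concat (map (edge_proj G) xs)"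

lemma edge_proj_edge: "y \<in> edges G \<Longrightarrow> edge_proj G y = [y]"
proof -
  assume y: "y \<in> edges G"
  then have "edge_dist G y = 0"
    unfolding edge_dist_def by (intro Least_eq_0) simp
  then show ?thesis
    using y unfolding edge_proj_def by (auto intro: exI[of _ 0])
qed

lemma edge_word_edges: "set xs \<subseteq> edges G \<Longrightarrow> edge_word G xs = xs"
  by (induction xs) (auto simp: edge_word_def edge_proj_edge)

lemma edge_proj_in_edges:
  assumes wf: "wf_lgraph G"
  shows "set (edge_proj G y) \<subseteq> edges G"
proof (cases "\<exists>k. (einv G ^^ k) y \<in> edges G")
  case True
  then have "(einv G ^^ edge_dist G y) y \<in> edges G"
    unfolding edge_dist_def by (rule LeastI_ex)
  then show ?thesis
    using True wf_lgraphD[OF wf] unfolding edge_proj_def by (auto simp: Let_def)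
qed (simp add: edge_proj_def)

lemma edge_word_in_edges: "wf_lgraph G \<Longrightarrow> set (edge_word G xs) \<subseteq> edges G"
  using edge_proj_in_edges by (fastforce simp: edge_word_def)

lemma orbit_meets_edges_einv:
  assumes y: "y \<notin> edges G"
  shows "(\<exists>k. (einv G ^^ k) y \<in> edges G) \<longleftrightarrow> (\<exists>k. (einv G ^^ k) (einv G y) \<in> edges G)"
proof
  assume "\<exists>k. (einv G ^^ k) y \<in> edges G"
  then obtain k where k: "(einv G ^^ k) y \<in> edges G" ..
  with y obtain k' where "k = Suc k'"
    by (cases k) auto
  then have "(einv G ^^ k') (einv G y) \<in> edges G"
    using k by (simp only: funpow_Suc_right o_apply)
  then show "\<exists>k. (einv G ^^ k) (einv G y) \<in> edges G" ..
next
  assume "\<exists>k. (einv G ^^ k) (einv G y) \<in> edges G"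
  then obtain k where "(einv G ^^ k) (einv G y) \<in> edges G" ..
  then have "(einv G ^^ Suc k) y \<in> edges G"
    by (simp only: funpow_Suc_right o_apply)
  then show "\<exists>k. (einv G ^^ k) y \<in> edges G" ..
qed

lemma edge_dist_einv:
  assumes y: "y \<notin> edges G" and k: "(einv G ^^ k) y \<in> edges G"
  shows "edge_dist G y = Suc (edge_dist G (einv G y))"
proof -
  have shift: "(\<lambda>m. (einv G ^^ Suc m) y \<in> edges G) = (\<lambda>m. (einv G ^^ m) (einv G y) \<in> edges G)"
    by (simp only: funpow_Suc_right o_apply)
  have "edge_dist G y = Suc (LEAST m. (einv G ^^ Suc m) y \<in> edges G)"
    unfolding edge_dist_def by (rule Least_Suc) (use k y in auto)
  then show ?thesis
    unfolding shift edge_dist_def .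
qed

lemma edge_proj_backtrack:
  assumes wf: "wf_lgraph G"
  shows "edge_proj G y @ edge_proj G (einv G y) = [] \<or>
    (\<exists>a\<in>edges G. edge_proj G y @ edge_proj G (einv G y) = [a, einv G a])"
proof (cases "y \<in> edges G")
  case True
  then have "edge_proj G y @ edge_proj G (einv G y) = [y, einv G y]"
    using edge_proj_edge[OF True] edge_proj_edge[OF wf_lgraphD(2)[OF wf True]] by simp
  then show ?thesis
    using True by blast
next
  case y: False
  note orbit = orbit_meets_edges_einv[OF y]
  show ?thesis
  proof (cases "\<exists>k. (einv G ^^ k) y \<in> edges G")
    case True
    then obtain k where k: "(einv G ^^ k) y \<in> edges G" ..
    define a where "a = (einv G ^^ edge_dist G (einv G y)) (einv G y)"
    have a: "a \<in> edges G"
      unfolding a_def edge_dist_def by (rule LeastI_ex) (use True orbit in blast)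
    have d: "edge_dist G y = Suc (edge_dist G (einv G y))"
      using edge_dist_einv[OF y k] .
    have "(einv G ^^ edge_dist G y) y = a"
      unfolding a_def d by (simp add: funpow_Suc_right del: funpow.simps)
    then show ?thesis
      using True orbit d a wf_lgraphD[OF wf a]
      unfolding edge_proj_def a_def[symmetric] by (auto simp: Let_def)
  qed (use orbit in \<open>simp add: edge_proj_def\<close>)
qed

theorem homotopic_reduce_eq:
  assumes wf: "wf_lgraph G" and s: "freely_reduced G s" and h: "homotopic G p q"
    and "set p \<subseteq> edges G" "set q \<subseteq> edges G"
  shows "reduce G s p = reduce G s q"
proof -
  have backtrack: "reduce G s (edge_word G xs) = reduce G s (edge_word G ys)"
    if bt: "backtrack_step G xs ys" for xs ys
  proof -
    obtain as e cs where xs: "xs = as @ [e, einv G e] @ cs" and ys: "ys = as @ cs"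
      using bt unfolding backtrack_step_def by blast
    let ?t = "reduce G s (edge_word G as)"
    have "freely_reduced G ?t"
      using freely_reduced_reduce[OF wf s edge_word_in_edges[OF wf]] .
    then have "reduce G ?t (edge_proj G e @ edge_proj G (einv G e)) = ?t"
      using edge_proj_backtrack[OF wf, of e] push_push_einv[OF wf] by (auto simp del: reduce_append)
    then show ?thesis
      unfolding xs ys edge_word_def by simp
  qed
  from h have "reduce G s (edge_word G p) = reduce G s (edge_word G q)"
    unfolding homotopic_def
  proof (induction rule: rtranclp_induct)
    case (step y z)
    then show ?case
      using backtrack[of y z] backtrack[of z y] by auto
  qed simp
  then show ?thesis
    using assms(4,5) by (simp add: edge_word_edges)
qed

lemma homotopic_conjugate_reduce_Nil:
  assumes wf: "wf_lgraph G" and R: "set R \<subseteq> edges G" and C: "set C \<subseteq> edges G"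
    and P: "set P \<subseteq> edges G" and h: "homotopic G C (R @ P @ rev_path G R)"
  shows "reduce G [] (rev_path G R @ rev_path G C @ R @ P) = []"
proof -
  define s1 where "s1 = reduce G [] (rev_path G R)"
  define s2 where "s2 = reduce G s1 (rev_path G C)"
  have s1: "freely_reduced G s1" and s2: "freely_reduced G s2"
    unfolding s1_def s2_def using freely_reduced_reduce[OF wf] rev_path_in_edges[OF wf] R C
    by simp_all
  define X where "X = reduce G (reduce G s2 R) P"
  have X: "freely_reduced G X"
    unfolding X_def using freely_reduced_reduce[OF wf] s2 R P by simp
  have "reduce G X (rev_path G R) = reduce G s2 C"
    using homotopic_reduce_eq[OF wf s2 h C] R P rev_path_in_edges[OF wf R] by (simp add: X_def)
  also have "\<dots> = s1"
    unfolding s2_def using reduce_rev_path_reduce[OF wf s1 C] .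
  finally have "X = reduce G s1 R"
    using reduce_rev_path_reduce[OF wf X R] by simp
  also have "\<dots> = []"
    unfolding s1_def using reduce_rev_path_reduce[OF wf freely_reduced_Nil R] .
  finally show ?thesis
    by (simp add: X_def s1_def s2_def)
qed

section \<open>An innermost cancelling pair of marked letters\<close>

text \<open>An unmarked letter cannot cancel a marked one.\<close>

lemma reduce_keeps_marked_prefix:
  assumes P_einv: "\<And>a. a \<in> edges G \<Longrightarrow> P (einv G a) = P a"
    and p: "p = [] \<or> P (last p)"
  shows "set xs \<subseteq> edges G \<Longrightarrow> \<forall>a\<in>set xs. \<not> P a \<Longrightarrow> \<forall>a\<in>set q. \<not> P a \<Longrightarrow>
    \<exists>q'. reduce G (p @ q) xs = p @ q' \<and> (\<forall>a\<in>set q'. \<not> P a)"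
proof (induction xs arbitrary: q)
  case (Cons x xs)
  have x: "x \<in> edges G" "\<not> P x"
    using Cons.prems by auto
  have "\<exists>q'. push G (p @ q) x = p @ q' \<and> (\<forall>a\<in>set q'. \<not> P a)"
  proof (cases "p @ q \<noteq> [] \<and> last (p @ q) = einv G x")
    case True
    have "q \<noteq> []"
      using True p P_einv[OF x(1)] x(2) by auto
    then have "push G (p @ q) x = p @ butlast q"
      using True by (simp add: push_cancel butlast_append)
    then show ?thesis
      using Cons.prems(3) by (auto dest: in_set_butlastD)
  next
    case False
    then show ?thesis
      using Cons.prems(3) x by (auto simp: push_append)
  qed
  then show ?case
    using Cons by fastforce
qed auto

lemma last_marked_push:
  assumes wf: "wf_lgraph G" and W: "set W \<subseteq> edges G"
    and P_einv: "\<And>a. a \<in> edges G \<Longrightarrow> P (einv G a) = P a" and marked: "\<exists>a\<in>set W. P a"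
  obtains i where "i < length W" "P (W ! i)"
    "reduced_prefix G W (Suc i) = reduced_prefix G W i @ [W ! i]"
    "\<And>k. i < k \<Longrightarrow> k < length W \<Longrightarrow> P (W ! k) \<Longrightarrow>
      reduced_prefix G W (Suc k) \<noteq> reduced_prefix G W k @ [W ! k]"
proof -
  define pushed where "pushed = {k. k < length W \<and> P (W ! k) \<and>
    reduced_prefix G W (Suc k) = reduced_prefix G W k @ [W ! k]}"
  have ex: "\<exists>k. k < length W \<and> P (W ! k)"
    using marked by (metis in_set_conv_nth)
  define k0 where "k0 = (LEAST k. k < length W \<and> P (W ! k))"
  have k0: "k0 < length W" "P (W ! k0)"
    unfolding k0_def using LeastI_ex[OF ex] by auto
  have "\<forall>a\<in>set (take k0 W). \<not> P a"
  proof
    fix a assume "a \<in> set (take k0 W)"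
    then obtain l where l: "l < k0" "W ! l = a"
      by (auto simp: in_set_conv_nth)
    have "\<not> (l < length W \<and> P (W ! l))"
      using not_less_Least l(1) unfolding k0_def .
    then show "\<not> P a"
      using l k0(1) by auto
  qed
  then obtain q where q: "reduced_prefix G W k0 = q" "\<forall>a\<in>set q. \<not> P a"
    using reduce_keeps_marked_prefix[where P = P, OF P_einv, of "[]" "take k0 W" "[]"] W
    by (auto simp: reduced_prefix_def dest: in_set_takeD)
  have "q \<noteq> [] \<Longrightarrow> last q \<noteq> einv G (W ! k0)"
    using q(2) P_einv k0 W by (metis last_in_set nth_mem subsetD)
  then have "k0 \<in> pushed"
    using k0 q(1) push_append[of "reduced_prefix G W k0" G "W ! k0"]
    by (auto simp: pushed_def reduced_prefix_Suc)
  moreover have "finite pushed"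
    by (simp add: pushed_def)
  ultimately have "Max pushed \<in> pushed" "\<And>k. k \<in> pushed \<Longrightarrow> k \<le> Max pushed"
    using Max_in by auto
  then show thesis
    using that[of "Max pushed"] unfolding pushed_def by fastforce
qed

text \<open>A pushed marked letter stays on the stack until a marked letter cancels it.\<close>

lemma marked_after_push:
  assumes W: "set W \<subseteq> edges G" and null: "reduce G [] W = []"
    and P_einv: "\<And>a. a \<in> edges G \<Longrightarrow> P (einv G a) = P a"
    and i: "P (W ! i)" "reduced_prefix G W (Suc i) = reduced_prefix G W i @ [W ! i]"
  shows "\<exists>k. i < k \<and> k < length W \<and> P (W ! k)"
proof (rule ccontr)
  let ?pre = "reduced_prefix G W"
  assume "\<not> ?thesis"
  then have "\<forall>a\<in>set (drop (Suc i) W). \<not> P a"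
    by (auto simp: in_set_conv_nth)
  then have "\<exists>q. reduce G (?pre (Suc i) @ []) (drop (Suc i) W) = ?pre (Suc i) @ q \<and>
      (\<forall>a\<in>set q. \<not> P a)"
    by (intro reduce_keeps_marked_prefix[where P = P, OF P_einv])
      (use i W in \<open>auto dest: in_set_dropD\<close>)
  moreover have "?pre (Suc i) \<noteq> []"
    using i(2) by simp
  ultimately show False
    using null reduce_reduced_prefix_drop[of G W "Suc i"] by auto
qed

lemma set_segment_nth:
  "x \<in> set (take (j - Suc i) (drop (Suc i) W)) \<Longrightarrow> \<exists>l. i < l \<and> l < j \<and> l < length W \<and> W ! l = x"
proof -
  assume "x \<in> set (take (j - Suc i) (drop (Suc i) W))"
  then obtain k where "k < j - Suc i" "k < length W - Suc i" "W ! (Suc i + k) = x"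
    by (auto simp: in_set_conv_nth)
  then show ?thesis
    by (intro exI[of _ "Suc i + k"]) auto
qed

lemma id_take_nth_segment_nth_drop:
  assumes "i < j" "j < length W"
  shows "W = take i W @ W ! i # take (j - Suc i) (drop (Suc i) W) @ W ! j # drop (Suc j) W"
proof -
  have "drop (Suc i) W = take (j - Suc i) (drop (Suc i) W) @ drop j W"
    using assms by (metis Suc_leI append_take_drop_id drop_drop le_add_diff_inverse2)
  then show ?thesis
    using assms by (metis Cons_nth_drop_Suc id_take_nth_drop less_trans)
qed

lemma next_marked_cancels_last_push:
  assumes wf: "wf_lgraph G" and W: "set W \<subseteq> edges G"
    and P_einv: "\<And>a. a \<in> edges G \<Longrightarrow> P (einv G a) = P a"
    and i: "P (W ! i)" "reduced_prefix G W (Suc i) = reduced_prefix G W i @ [W ! i]"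
    and j: "i < j" "j < length W" "P (W ! j)"
      "reduced_prefix G W (Suc j) \<noteq> reduced_prefix G W j @ [W ! j]"
    and between: "\<And>l. i < l \<Longrightarrow> l < j \<Longrightarrow> \<not> P (W ! l)"
  shows "reduced_prefix G W j = reduced_prefix G W (Suc i)" "W ! j = einv G (W ! i)"
proof -
  let ?pre = "reduced_prefix G W"
  define M where "M = take (j - Suc i) (drop (Suc i) W)"
  have M: "set M \<subseteq> edges G" "\<forall>a\<in>set M. \<not> P a"
    unfolding M_def using W between by (auto dest: in_set_takeD in_set_dropD set_segment_nth)
  obtain q where q: "?pre j = ?pre (Suc i) @ q" "\<forall>a\<in>set q. \<not> P a"
    using reduce_keeps_marked_prefix[where P = P, OF P_einv _ M, of "?pre (Suc i)" "[]"]
      reduced_prefix_segment[of "Suc i" j G W] i j(1) by (auto simp: M_def)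
  have Wj: "W ! j \<in> edges G"
    using W j(2) by auto
  have pop: "?pre j \<noteq> [] \<and> last (?pre j) = einv G (W ! j)"
    using j(4) reduced_prefix_Suc[OF j(2)] push_append by metis
  have "q = []"
  proof (rule ccontr)
    assume "q \<noteq> []"
    then have "last (?pre j) \<in> set q"
      using q(1) by simp
    moreover have "P (last (?pre j))"
      using pop P_einv[OF Wj] j(3) by simp
    ultimately show False
      using q(2) by blast
  qed
  then show "?pre j = ?pre (Suc i)"
    using q(1) by simp
  then have "einv G (W ! j) = W ! i"
    using pop i(2) by simp
  then show "W ! j = einv G (W ! i)"
    using wf_lgraphD(3)[OF wf Wj] by metis
qed

lemma map_eq_append_Cons_append_ConsE:
  assumes "map f w = A' @ a # M' @ a' # D'"
  obtains A e M e' D where "w = A @ e # M @ e' # D" "map f A = A'" "f e = a" "map f M = M'"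
    "f e' = a'" "map f D = D'"
proof -
  obtain A r where "w = A @ r" "map f A = A'" "map f r = a # M' @ a' # D'"
    using assms by (auto simp: map_eq_append_conv)
  moreover obtain e r' where "r = e # r'" "f e = a" "map f r' = M' @ a' # D'"
    using calculation(3) by (auto simp: map_eq_Cons_conv)
  moreover obtain M r'' where "r' = M @ r''" "map f M = M'" "map f r'' = a' # D'"
    using calculation(6) by (auto simp: map_eq_append_conv)
  moreover obtain e' D where "r'' = e' # D" "f e' = a'" "map f D = D'"
    using calculation(9) by (auto simp: map_eq_Cons_conv)
  ultimately show thesis
    using that by simp
qed

text \<open>The last marked letter pushed onto the stack is cancelled by the next marked letter.\<close>

theorem innermost_cancelling_pair:
  assumes wf: "wf_lgraph G" and W: "set W \<subseteq> edges G" and null: "reduce G [] W = []"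
    and P_einv: "\<And>a. a \<in> edges G \<Longrightarrow> P (einv G a) = P a" and marked: "\<exists>a\<in>set W. P a"
  obtains A a M D where "W = A @ a # M @ einv G a # D" "P a" "\<forall>x\<in>set M. \<not> P x"
    "reduce G [] M = []" "reduce G [] (A @ D) = []"
proof -
  let ?pre = "reduced_prefix G W"
  obtain i where i: "i < length W" "P (W ! i)" "?pre (Suc i) = ?pre i @ [W ! i]"
    and later: "\<And>k. i < k \<Longrightarrow> k < length W \<Longrightarrow> P (W ! k) \<Longrightarrow> ?pre (Suc k) \<noteq> ?pre k @ [W ! k]"
    using last_marked_push[OF wf W P_einv marked] by blast
  have later_marked: "\<exists>k. i < k \<and> k < length W \<and> P (W ! k)"
    using marked_after_push[OF W null P_einv i(2,3)] .
  define j where "j = (LEAST k. i < k \<and> k < length W \<and> P (W ! k))"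
  have j: "i < j" "j < length W" "P (W ! j)"
    using LeastI_ex[OF later_marked] unfolding j_def by auto
  have between: "\<not> P (W ! l)" if "i < l" "l < j" for l
    using not_less_Least[OF that(2)[unfolded j_def]] that(1) j(2) \<open>l < j\<close> by auto
  note cancels = next_marked_cancels_last_push[OF wf W P_einv i(2,3) j later[OF j] between]
  define M where "M = take (j - Suc i) (drop (Suc i) W)"
  show thesis
  proof (rule that)
    show "W = take i W @ W ! i # M @ einv G (W ! i) # drop (Suc j) W"
      using id_take_nth_segment_nth_drop[OF j(1,2)] cancels(2) by (simp add: M_def)
    show "\<forall>x\<in>set M. \<not> P x"
      unfolding M_def using between by (auto dest: set_segment_nth)
    have "set M \<subseteq> edges G"
      unfolding M_def using W by (auto dest: in_set_takeD in_set_dropD)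
    then show "reduce G [] M = []"
      using reduce_eq_self_imp_Nil[OF wf freely_reduced_reduced_prefix[OF wf W]]
        reduced_prefix_segment[of "Suc i" j G W] cancels(1) j(1) by (simp add: M_def)
    have "W ! i \<in> edges G"
      using W i(1) by auto
    have "?pre (Suc j) = push G (?pre i @ [W ! i]) (einv G (W ! i))"
      using cancels i(3) reduced_prefix_Suc[OF j(2), of G] by simp
    also have "\<dots> = ?pre i"
      using wf_lgraphD(3)[OF wf \<open>W ! i \<in> edges G\<close>] by (simp add: push_cancel)
    finally show "reduce G [] (take i W @ drop (Suc j) W) = []"
      using reduce_reduced_prefix_drop[of G W "Suc j"] null by (simp add: reduced_prefix_def)
  qed (use i(2) in auto)
qed

section \<open>The tree spanned by the lift of a path\<close>

locale path_tree =
  fixes H :: "('v, 'e, 'b) lgraph" and z :: 'v and W :: "'e list" and z' :: 'v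
  assumes wf: "wf_lgraph H" and W_path: "is_path H z W z'"
begin

abbreviation pre :: "nat \<Rightarrow> 'e list" where
  "pre \<equiv> reduced_prefix H W"

definition prefixes :: "'e list set" where
  "prefixes = pre ` {0..length W}"

definition idx :: "'e list \<Rightarrow> nat" where
  "idx c = (LEAST k. pre k = c)"

text \<open>The tree is the subtree of the universal cover of \<open>H\<close> (based at \<open>z\<close>) spanned by the lift
  of \<open>W\<close>; its vertices are the reduced prefixes \<open>c\<close> of \<open>W\<close>, numbered by \<open>idx c\<close>. The edge between
  \<open>butlast c\<close> and \<open>c\<close> is numbered \<open>Suc (2 * idx c)\<close> when pointing away from the root \<open>[]\<close>
  and \<open>2 * idx c\<close> when pointing towards it.\<close>

definition tree_edges :: "nat set" where
  "tree_edges = {2 * idx c + d | c d. c \<in> prefixes \<and> c \<noteq> [] \<and> d < (2::nat)}"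

definition edge_image :: "nat \<Rightarrow> 'e" where
  "edge_image n = (if even n then einv H (last (pre (n div 2))) else last (pre (n div 2)))"

definition tree :: "(nat, nat, 'b) lgraph" where
  "tree = \<lparr>verts = idx ` prefixes, edges = tree_edges,
    src = (\<lambda>n. if even n then idx (pre (n div 2)) else idx (butlast (pre (n div 2)))),
    einv = (\<lambda>n. if even n then Suc n else n - 1),
    lab = (\<lambda>n. lab H (edge_image n))\<rparr>"

lemma tree_simps:
  "verts tree = idx ` prefixes" "edges tree = tree_edges"
  "src tree n = (if even n then idx (pre (n div 2)) else idx (butlast (pre (n div 2))))"
  "einv tree n = (if even n then Suc n else n - 1)"
  "lab tree n = lab H (edge_image n)"
  by (simp_all add: tree_def)

lemma W_edges: "set W \<subseteq> edges H"
  using is_path_in_edges[OF W_path] .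

lemma freely_reduced_pre: "freely_reduced H (pre k)"
  using freely_reduced_reduced_prefix[OF wf W_edges] .

lemma is_path_pre: "k \<le> length W \<Longrightarrow> is_path H z (pre k) (path_end H z (take k W))"
  unfolding reduced_prefix_def
  by (rule is_path_reduce[OF wf _ is_path_take[OF wf W_path]])
    (simp add: is_path_start_in_verts[OF wf W_path])

lemma pre_in_prefixes: "k \<le> length W \<Longrightarrow> pre k \<in> prefixes"
  by (simp add: prefixes_def)

lemma Nil_in_prefixes: "[] \<in> prefixes"
  using pre_in_prefixes[of 0] by simp

lemma pre_idx: "c \<in> prefixes \<Longrightarrow> pre (idx c) = c"
  unfolding prefixes_def idx_def by (auto intro: LeastI)

lemma idx_le_length: "c \<in> prefixes \<Longrightarrow> idx c \<le> length W"
  unfolding prefixes_def idx_def by (auto intro: Least_le[THEN order.trans])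

lemma is_path_prefix: "c \<in> prefixes \<Longrightarrow> is_path H z c (path_end H z c)"
  using is_path_pre idx_le_length pre_idx is_path_path_end by metis

lemma take_pre_in_prefixes: "k \<le> length W \<Longrightarrow> j \<le> length (pre k) \<Longrightarrow> take j (pre k) \<in> prefixes"
proof (induction k arbitrary: j)
  case 0
  then show ?case using Nil_in_prefixes by simp
next
  case (Suc k)
  have k: "k < length W"
    using Suc.prems(1) by simp
  show ?case
  proof (cases "pre k \<noteq> [] \<and> last (pre k) = einv H (W ! k)")
    case True
    then have "pre (Suc k) = butlast (pre k)"
      by (simp add: reduced_prefix_Suc[OF k] push_cancel)
    moreover have "j < length (pre k)"
    proof -
      have "j \<le> length (pre k) - 1" "0 < length (pre k)"
        using Suc.prems(2) True calculation by simp_all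
      then show ?thesis
        by linarith
    qed
    ultimately show ?thesis
      using Suc by (simp add: take_butlast)
  next
    case False
    then have "pre (Suc k) = pre k @ [W ! k]"
      by (simp add: reduced_prefix_Suc[OF k] push_append)
    then show ?thesis
      using Suc pre_in_prefixes[OF Suc.prems(1)] by (cases "j \<le> length (pre k)") auto
  qed
qed

lemma butlast_in_prefixes: "c \<in> prefixes \<Longrightarrow> butlast c \<in> prefixes"
  using take_pre_in_prefixes[of _ "length c - 1"] by (auto simp: prefixes_def butlast_conv_take)

lemma last_prefix_in_edges: "c \<in> prefixes \<Longrightarrow> c \<noteq> [] \<Longrightarrow> last c \<in> edges H"
  using freely_reduced_pre pre_idx by (metis freely_reduced_def last_in_set subsetD)

lemma last_prefix_not_backtrack:
  "c \<in> prefixes \<Longrightarrow> butlast c \<noteq> [] \<Longrightarrow> last c \<noteq> einv H (last (butlast c))"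
  using freely_reduced_pre pre_idx
  by (metis append_butlast_last_id butlast.simps(1) freely_reduced_snoc)

lemma tree_edges_cases:
  assumes "n \<in> tree_edges"
  obtains (towards_root) c where "c \<in> prefixes" "c \<noteq> []" "n = 2 * idx c" "pre (n div 2) = c"
  | (away_from_root) c where "c \<in> prefixes" "c \<noteq> []" "n = Suc (2 * idx c)" "pre (n div 2) = c"
  using assms pre_idx unfolding tree_edges_def by (auto simp: less_2_cases_iff)

lemma edge_image_in_edges: "n \<in> tree_edges \<Longrightarrow> edge_image n \<in> edges H"
  by (cases rule: tree_edges_cases)
    (auto simp: edge_image_def intro: last_prefix_in_edges wf_lgraphD(2)[OF wf])

lemma tree_einv_cases:
  assumes "n \<in> tree_edges"
  obtains c where "c \<in> prefixes" "c \<noteq> []" "n = 2 * idx c" "einv tree n = Suc (2 * idx c)"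
  | c where "c \<in> prefixes" "c \<noteq> []" "n = Suc (2 * idx c)" "einv tree n = 2 * idx c"
  using assms by (cases rule: tree_edges_cases) (auto simp: tree_simps)

lemma tree_src_tgt:
  assumes "c \<in> prefixes" "c \<noteq> []"
  shows "src tree (2 * idx c) = idx c" "tgt tree (2 * idx c) = idx (butlast c)"
    "src tree (Suc (2 * idx c)) = idx (butlast c)" "tgt tree (Suc (2 * idx c)) = idx c"
    "edge_image (2 * idx c) = einv H (last c)" "edge_image (Suc (2 * idx c)) = last c"
  using assms pre_idx by (simp_all add: tgt_def tree_simps edge_image_def)

lemma tree_edge_in_edges:
  assumes "c \<in> prefixes" "c \<noteq> []"
  shows "2 * idx c \<in> tree_edges" "Suc (2 * idx c) \<in> tree_edges"
  unfolding tree_edges_def using assms by force+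

lemma wf_tree: "wf_lgraph tree"
  unfolding wf_lgraph_def
proof (intro ballI conjI)
  fix n assume "n \<in> edges tree"
  then have n: "n \<in> tree_edges"
    by (simp add: tree_simps)
  then show "src tree n \<in> verts tree"
    by (cases rule: tree_edges_cases) (auto simp: tree_simps butlast_in_prefixes)
  from n show "einv tree n \<in> edges tree"
    by (cases rule: tree_einv_cases) (simp_all add: tree_simps tree_edge_in_edges)
  show "einv tree (einv tree n) = n" "einv tree n \<noteq> n"
    by (auto simp: tree_simps elim: oddE)
  from n show "lab tree (einv tree n) = inv_label (lab tree n)"
    by (cases rule: tree_einv_cases)
      (auto simp: tree_simps tree_src_tgt wf_lgraphD[OF wf last_prefix_in_edges])
qed

lemma tree_vertex_eqI: "x \<in> verts tree \<Longrightarrow> y \<in> verts tree \<Longrightarrow> pre x = pre y \<Longrightarrow> x = y"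
  by (auto simp: tree_simps pre_idx)

lemma tree_step:
  assumes "n \<in> tree_edges"
  shows "push H (pre (src tree n)) (edge_image n) = pre (tgt tree n)"
  using assms
proof (cases rule: tree_edges_cases)
  case (towards_root c)
  have "last c = einv H (einv H (last c))"
    using wf_lgraphD(3)[OF wf last_prefix_in_edges] towards_root by simp
  then show ?thesis
    using towards_root by (simp add: tree_src_tgt pre_idx butlast_in_prefixes push_cancel)
next
  case (away_from_root c)
  have "\<not> (butlast c \<noteq> [] \<and> last (butlast c) = einv H (last c))"
    using last_prefix_not_backtrack[OF away_from_root(1)] away_from_root(1,2)
      wf_lgraphD(3)[OF wf last_prefix_in_edges] by metis
  then show ?thesis
    using away_from_root by (simp add: tree_src_tgt pre_idx butlast_in_prefixes push_append)
qed

lemma reduce_tree_path: "is_path tree x q y \<Longrightarrow> reduce H (pre x) (map edge_image q) = pre y"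
proof (induction q arbitrary: x)
  case (Cons n q)
  then show ?case
    using tree_step by (auto simp: tree_simps)
qed simp

lemma tree_edge_by_ends:
  assumes "n \<in> tree_edges"
  shows "n = (if length (pre (tgt tree n)) < length (pre (src tree n)) then 2 * src tree n
    else Suc (2 * tgt tree n))"
  using assms
proof (cases rule: tree_edges_cases)
  case (towards_root c)
  then show ?thesis
    by (simp add: tree_src_tgt pre_idx butlast_in_prefixes)
next
  case (away_from_root c)
  then show ?thesis
    by (auto simp: tree_src_tgt pre_idx butlast_in_prefixes)
qed

lemma tree_edge_eqI:
  "n \<in> tree_edges \<Longrightarrow> n' \<in> tree_edges \<Longrightarrow> src tree n = src tree n' \<Longrightarrow> tgt tree n = tgt tree n' \<Longrightarrow>
    n = n'"
  using tree_edge_by_ends by metis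

text \<open>If the images were inverse, pushing them would restore the stack, so \<open>n2\<close> would end where \<open>n1\<close>
  starts; as edges are determined by their ends, \<open>n2\<close> would be the inverse of \<open>n1\<close>.\<close>

lemma edge_image_not_backtrack:
  assumes n1: "n1 \<in> tree_edges" and n2: "n2 \<in> tree_edges"
    and consec: "src tree n2 = tgt tree n1" and ne: "n2 \<noteq> einv tree n1"
  shows "edge_image n2 \<noteq> einv H (edge_image n1)"
proof
  assume inverse: "edge_image n2 = einv H (edge_image n1)"
  have n1': "n1 \<in> edges tree" and n2': "n2 \<in> edges tree"
    using n1 n2 by (simp_all add: tree_simps)
  have "pre (tgt tree n2) =
      push H (push H (pre (src tree n1)) (edge_image n1)) (einv H (edge_image n1))"
    using tree_step[OF n1] tree_step[OF n2] consec inverse by simp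
  also have "\<dots> = pre (src tree n1)"
    using push_push_einv[OF wf freely_reduced_pre edge_image_in_edges[OF n1]] .
  finally have "tgt tree n2 = src tree n1"
    using tree_vertex_eqI tgt_in_verts[OF wf_tree n2'] wf_lgraphD(1)[OF wf_tree n1'] by blast
  moreover have "einv tree n1 \<in> tree_edges" "src tree (einv tree n1) = tgt tree n1"
    "tgt tree (einv tree n1) = src tree n1"
    using wf_lgraphD(2)[OF wf_tree n1'] tgt_einv[OF wf_tree n1'] by (simp_all add: tgt_def tree_simps)
  ultimately have "n2 = einv tree n1"
    using tree_edge_eqI[OF n2] consec by simp
  with ne show False ..
qed

lemma freely_reduced_edge_image:
  assumes p: "is_path tree x q y" and imm: "immersed tree q"
  shows "freely_reduced H (map edge_image q)"
proof -
  have q: "set q \<subseteq> tree_edges"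
    using is_path_in_edges[OF p] by (simp add: tree_simps)
  have "map edge_image q ! Suc i \<noteq> einv H (map edge_image q ! i)"
    if i: "Suc i < length (map edge_image q)" for i
  proof -
    have "q ! i \<in> tree_edges" "q ! Suc i \<in> tree_edges"
      using i q by auto
    then show ?thesis
      using edge_image_not_backtrack is_path_nth_tgt_src[OF p] imm i by (simp add: immersed_def)
  qed
  then show ?thesis
    using q edge_image_in_edges by (auto simp: freely_reduced_def immersed_def)
qed

lemma path_from_root: "c \<in> prefixes \<Longrightarrow> \<exists>p. is_path tree (idx []) p (idx c)"
proof (induction "length c" arbitrary: c)
  case 0
  then show ?case
    using Nil_in_prefixes by (intro exI[of _ "[]"]) (simp add: tree_simps)
next
  case (Suc l)
  then have c: "c \<noteq> []"
    by auto
  obtain p where "is_path tree (idx []) p (idx (butlast c))"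
    using Suc butlast_in_prefixes by fastforce
  moreover have "is_path tree (idx (butlast c)) [Suc (2 * idx c)] (idx c)"
    using Suc.prems c tree_edge_in_edges by (simp add: tree_simps tree_src_tgt pre_idx)
  ultimately show ?case
    using is_path_append[OF wf_tree] by blast
qed

lemma connected_tree: "connected_lg tree"
  unfolding connected_lg_def
proof (intro conjI ballI)
  show "verts tree \<noteq> {}"
    using Nil_in_prefixes by (auto simp: tree_simps)
  fix u v assume "u \<in> verts tree" "v \<in> verts tree"
  then obtain a b where "a \<in> prefixes" "b \<in> prefixes" "u = idx a" "v = idx b"
    by (auto simp: tree_simps)
  then obtain p q where p: "is_path tree (idx []) p u" and q: "is_path tree (idx []) q v"
    using path_from_root by blast
  have "is_path tree u (rev_path tree p @ q) v"
    using is_path_rev_path[OF wf_tree p] q by (auto simp: is_path_append[OF wf_tree])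
  then show "\<exists>p. is_path tree u p v" ..
qed

text \<open>An immersed loop at \<open>c\<close> maps to a reduced word that fixes the stack \<open>c\<close>, hence is empty.\<close>

theorem is_tree_tree: "is_tree tree"
  unfolding is_tree_def
proof (intro conjI allI impI wf_tree connected_tree)
  fix v q assume "is_path tree v q v \<and> immersed tree q"
  then have p: "is_path tree v q v" and imm: "immersed tree q"
    by auto
  have r: "freely_reduced H (map edge_image q)"
    using freely_reduced_edge_image[OF p imm] .
  have "reduce H [] (map edge_image q) = []"
    using reduce_eq_self_imp_Nil[OF wf freely_reduced_pre _ reduce_tree_path[OF p]] r
    by (simp add: freely_reduced_def)
  then show "q = []"
    using reduce_Nil_freely_reduced[OF wf r] by simp
qed

text \<open>The \<open>k\<close>-th letter of \<open>W\<close> lifts to an edge towards the root when it cancels the top of the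
  stack, and away from the root otherwise.\<close>

definition lift_edge :: "nat \<Rightarrow> nat" where
  "lift_edge k = (if pre k \<noteq> [] \<and> last (pre k) = einv H (W ! k) then 2 * idx (pre k)
    else Suc (2 * idx (pre (Suc k))))"

lemma lift_edge:
  assumes k: "k < length W"
  shows "lift_edge k \<in> tree_edges" "src tree (lift_edge k) = idx (pre k)"
    "tgt tree (lift_edge k) = idx (pre (Suc k))" "edge_image (lift_edge k) = W ! k"
proof -
  have Wk: "W ! k \<in> edges H"
    using W_edges k by auto
  have "lift_edge k \<in> tree_edges \<and> src tree (lift_edge k) = idx (pre k) \<and>
    tgt tree (lift_edge k) = idx (pre (Suc k)) \<and> edge_image (lift_edge k) = W ! k"
  proof (cases "pre k \<noteq> [] \<and> last (pre k) = einv H (W ! k)")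
    case True
    have "lift_edge k = 2 * idx (pre k)"
      unfolding lift_edge_def by (rule if_P[OF True])
    moreover have "pre (Suc k) = butlast (pre k)"
      using True by (simp add: reduced_prefix_Suc[OF k] push_cancel)
    ultimately show ?thesis
      using True pre_in_prefixes[of k] k wf_lgraphD(3)[OF wf Wk]
      by (simp add: tree_edge_in_edges tree_src_tgt)
  next
    case False
    have "lift_edge k = Suc (2 * idx (pre (Suc k)))"
      unfolding lift_edge_def by (rule if_not_P[OF False])
    moreover have "pre (Suc k) = pre k @ [W ! k]"
      using False by (simp add: reduced_prefix_Suc[OF k] push_append)
    ultimately show ?thesis
      using pre_in_prefixes[of "Suc k"] k by (simp add: tree_edge_in_edges tree_src_tgt)
  qed
  then show "lift_edge k \<in> tree_edges" "src tree (lift_edge k) = idx (pre k)"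
    "tgt tree (lift_edge k) = idx (pre (Suc k))" "edge_image (lift_edge k) = W ! k"
    by auto
qed

definition lift :: "(nat \<Rightarrow> nat) \<times> (nat \<times> bool \<Rightarrow> nat)" where
  "lift = (\<lambda>k. idx (pre k), \<lambda>(k, d). if d then lift_edge k else einv tree (lift_edge k))"

definition proj :: "(nat \<Rightarrow> 'v) \<times> (nat \<Rightarrow> 'e)" where
  "proj = (\<lambda>x. path_end H z (pre x), edge_image)"

lemma edge_image_einv: "n \<in> tree_edges \<Longrightarrow> edge_image (einv tree n) = einv H (edge_image n)"
  by (cases rule: tree_einv_cases)
    (auto simp: tree_src_tgt wf_lgraphD(3)[OF wf last_prefix_in_edges])

lemma lift_strict_morphism:
  assumes m: "Suc m = length W" and L: "\<forall>k\<le>m. L k = lab H (W ! k)"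
  shows "strict_morphism (interval_graph m L) tree lift"
  unfolding strict_morphism_def
proof (intro conjI ballI)
  fix x assume "x \<in> verts (interval_graph m L)"
  then show "fst lift x \<in> verts tree"
    using m pre_in_prefixes by (simp add: interval_graph_def lift_def tree_simps)
next
  fix e assume "e \<in> edges (interval_graph m L)"
  then obtain k d where e: "e = (k, d)" and k: "k < length W" and Lk: "L k = lab H (W ! k)"
    using m L by (auto simp: interval_graph_def)
  have n: "lift_edge k \<in> edges tree"
    using lift_edge(1)[OF k] by (simp add: tree_simps)
  note n_wf = wf_lgraphD[OF wf_tree n]
  show "snd lift e \<in> edges tree"
    using e n n_wf by (cases d) (auto simp: lift_def)
  show "src tree (snd lift e) = fst lift (src (interval_graph m L) e)"
    using e lift_edge[OF k] n_wf by (cases d) (auto simp: interval_graph_def lift_def tgt_def)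
  show "snd lift (einv (interval_graph m L) e) = einv tree (snd lift e)"
    using e n_wf by (cases d) (auto simp: interval_graph_def lift_def)
  show "lab tree (snd lift e) = lab (interval_graph m L) e"
    using e lift_edge[OF k] n_wf Lk by (cases d) (auto simp: interval_graph_def lift_def tree_simps)
qed

lemma proj_strict_morphism: "strict_morphism tree H proj"
  unfolding strict_morphism_def
proof (intro conjI ballI)
  fix x assume "x \<in> verts tree"
  then show "fst proj x \<in> verts H"
    using is_path_end_in_verts[OF is_path_prefix] by (auto simp: proj_def tree_simps pre_idx)
next
  fix n assume "n \<in> edges tree"
  then have n: "n \<in> tree_edges"
    by (simp add: tree_simps)
  show "snd proj n \<in> edges H" "lab H (snd proj n) = lab tree n"
    using edge_image_in_edges[OF n] by (simp_all add: proj_def tree_simps)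
  show "snd proj (einv tree n) = einv H (snd proj n)"
    using edge_image_einv[OF n] by (simp add: proj_def)
  show "src H (snd proj n) = fst proj (src tree n)"
    using n
  proof (cases rule: tree_edges_cases)
    case (towards_root c)
    then show ?thesis
      using wf_lgraphD(3)[OF wf last_prefix_in_edges]
      by (simp add: proj_def tree_src_tgt pre_idx path_end_def tgt_def)
  next
    case (away_from_root c)
    then have "is_path H z (butlast c @ [last c]) (path_end H z c)"
      using is_path_prefix by simp
    then have "src H (last c) = path_end H z (butlast c)"
      using is_path_path_end by (fastforce simp: is_path_append[OF wf])
    then show ?thesis
      using away_from_root by (simp add: proj_def tree_src_tgt pre_idx butlast_in_prefixes)
  qed
qed

lemma proj_lift:
  assumes m: "Suc m = length W"
  shows "x \<in> verts (interval_graph m L) \<Longrightarrow> fst proj (fst lift x) = fst (path_map H z W) x"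
    and "e \<in> edges (interval_graph m L) \<Longrightarrow> snd proj (snd lift e) = snd (path_map H z W) e"
proof -
  assume "x \<in> verts (interval_graph m L)"
  then have "x \<le> length W"
    using m by (simp add: interval_graph_def)
  then show "fst proj (fst lift x) = fst (path_map H z W) x"
    using is_path_path_end[OF is_path_pre] pre_idx pre_in_prefixes
    by (simp add: proj_def lift_def path_map_def)
next
  assume "e \<in> edges (interval_graph m L)"
  then obtain k d where e: "e = (k, d)" and k: "k < length W"
    using m by (auto simp: interval_graph_def)
  then show "snd proj (snd lift e) = snd (path_map H z W) e"
    using lift_edge[OF k] edge_image_einv by (cases d) (simp_all add: proj_def lift_def path_map_def)
qed

lemma lift_first_eq_lift_last:
  assumes W: "W = a # W' @ [einv H a]" and null: "reduce H [] W' = []"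
  shows "snd lift (0, True) = snd lift (Suc (length W'), False)"
proof -
  let ?m = "Suc (length W')"
  have a: "a \<in> edges H"
    using W_edges W by simp
  have pre1: "pre 1 = [a]"
    using W by (simp add: reduced_prefix_def push_def)
  have "pre ?m = reduce H [a] W'"
    using W by (simp add: reduced_prefix_def push_def)
  also have "\<dots> = [a]"
    using reduce_Nil_imp_eq_self[OF wf _ _ null] W_edges W a by (simp add: freely_reduced_def immersed_def)
  finally have prem: "pre ?m = [a]" .
  have "lift_edge 0 = Suc (2 * idx [a])"
    using pre1 by (simp add: lift_edge_def)
  moreover have "W ! ?m = einv H a"
    using W by (simp add: nth_append)
  then have "lift_edge ?m = 2 * idx [a]"
    using prem wf_lgraphD(3)[OF wf a] by (simp add: lift_edge_def)
  ultimately show ?thesis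
    by (simp add: lift_def tree_simps)
qed

end

theorem path_factors_through_tree:
  assumes wf: "wf_lgraph H" and p: "is_path H z W z'" and m: "Suc m = length W"
    and L: "\<forall>k\<le>m. L k = lab H (W ! k)"
    and W: "W = a # W' @ [einv H a]" and null: "reduce H [] W' = []"
  shows "\<exists>(T :: (nat, nat, 'b) lgraph) g' h. is_tree T \<and>
    strict_morphism (interval_graph m L) T g' \<and> strict_morphism T H h \<and>
    (\<forall>x\<in>verts (interval_graph m L). fst h (fst g' x) = fst (path_map H z W) x) \<and>
    (\<forall>e\<in>edges (interval_graph m L). snd h (snd g' e) = snd (path_map H z W) e) \<and>
    snd g' (0, True) = snd g' (m, False)"
proof -
  interpret path_tree H z W z'
    using wf p by unfold_locales
  have "m = Suc (length W')"
    using m W by simp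
  then show ?thesis
    using is_tree_tree lift_strict_morphism[OF m L] proj_strict_morphism proj_lift[OF m]
      lift_first_eq_lift_last[OF W null] by blast
qed

section \<open>Cancelling arcs\<close>

locale lgraph_morphism =
  fixes S0 :: "('v0, 'e0, 'b) lgraph" and S1 :: "('v1, 'e1, 'b) lgraph"
    and g :: "('v0 \<Rightarrow> 'v1) \<times> ('e0 \<Rightarrow> 'e1)"
  assumes wf0: "wf_lgraph S0" and wf1: "wf_lgraph S1" and morph: "strict_morphism S0 S1 g"
begin

text \<open>In the paper's notation \<open>x = e\<^sub>0\<close>, \<open>w = e\<^sub>1 \<dots> e\<^sub>m\<^sub>-\<^sub>1\<close> and \<open>y = e\<^sub>m\<close>; the image of the arc
  returns along the image of \<open>x\<close> after the null-homotopic middle part \<open>w\<close>.\<close>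

definition cancelling_arc :: "'b \<Rightarrow> 'e0 \<Rightarrow> 'e0 list \<Rightarrow> 'e0 \<Rightarrow> bool" where
  "cancelling_arc b x w y \<longleftrightarrow> (\<exists>u v. is_path S0 u (x # w @ [y]) v) \<and> fst (lab S0 x) = b \<and>
    snd g y = einv S1 (snd g x) \<and> reduce S1 [] (map (snd g) w) = []"

lemma cancelling_arc_edges:
  "cancelling_arc b x w y \<Longrightarrow> x \<in> edges S0 \<and> set w \<subseteq> edges S0 \<and> y \<in> edges S0"
  unfolding cancelling_arc_def by (auto dest!: is_path_in_edges)

lemma cancelling_arc_lab:
  assumes "cancelling_arc b x w y"
  shows "lab S0 y = inv_label (lab S0 x)"
proof -
  have "x \<in> edges S0" "y \<in> edges S0"
    using cancelling_arc_edges[OF assms] by auto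
  then show ?thesis
    using assms strict_morphism_edgeD[OF morph] wf_lgraphD(5)[OF wf1]
    unfolding cancelling_arc_def by metis
qed

lemma cancelling_arc_drop_loop:
  assumes arc: "cancelling_arc b x (A @ (e # B @ [einv S0 e]) @ C) y"
    and null: "reduce S1 [] (map (snd g) (A @ C)) = []"
  shows "cancelling_arc b x (A @ C) y"
proof -
  obtain u v where "is_path S0 u ((x # A) @ (e # B @ [einv S0 e]) @ (C @ [y])) v"
    using arc unfolding cancelling_arc_def by auto
  then have "is_path S0 u (x # (A @ C) @ [y]) v"
    using is_path_drop_loop[OF wf0] by fastforce
  then show ?thesis
    using arc null unfolding cancelling_arc_def by blast
qed

lemma cancelling_arc_drop_backtrack:
  assumes arc: "cancelling_arc b x (A @ [e, einv S0 e] @ C) y"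
  shows "cancelling_arc b x (A @ C) y"
proof -
  have e: "e \<in> edges S0" and A: "set (map (snd g) A) \<subseteq> edges S1"
    using cancelling_arc_edges[OF arc] strict_morphism_edgeD(1)[OF morph] by auto
  have "reduce S1 [] (map (snd g) (A @ [e, einv S0 e] @ C)) = reduce S1 [] (map (snd g) (A @ C))"
    using push_push_einv[OF wf1 freely_reduced_reduce[OF wf1 freely_reduced_Nil A]]
      strict_morphism_edgeD[OF morph e] by simp
  then show ?thesis
    using cancelling_arc_drop_loop[of b x A e "[]" C y] arc by (simp add: cancelling_arc_def)
qed

lemma cancelling_arc_inner:
  assumes arc: "cancelling_arc b x (A @ a # M @ a' # D) y" and "fst (lab S0 a) = b"
    and "snd g a' = einv S1 (snd g a)" and "reduce S1 [] (map (snd g) M) = []"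
  shows "cancelling_arc b a M a'"
proof -
  obtain u v where "is_path S0 u ((x # A) @ (a # M @ [a']) @ (D @ [y])) v"
    using arc unfolding cancelling_arc_def by auto
  then have "\<exists>u v. is_path S0 u (a # M @ [a']) v"
    using is_path_append[OF wf0] by metis
  then show ?thesis
    using assms unfolding cancelling_arc_def by blast
qed

lemma cancelling_arc_immersed:
  assumes arc: "cancelling_arc b x w y" and ne: "x \<noteq> einv S0 y" and imm: "immersed S0 w"
    and unmarked: "\<forall>e\<in>set w. fst (lab S0 e) \<noteq> b"
  shows "immersed S0 (x # w @ [y])"
proof -
  have edges: "x \<in> edges S0" "set w \<subseteq> edges S0" "y \<in> edges S0"
    using cancelling_arc_edges[OF arc] by auto
  have x_inv: "fst (lab S0 (einv S0 x)) = b"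
    using arc edges wf_lgraphD(5)[OF wf0] unfolding cancelling_arc_def by simp
  have w_inv: "fst (lab S0 (einv S0 e)) \<noteq> b" if "e \<in> set w" for e
    using unmarked that wf_lgraphD(5)[OF wf0] edges(2) by (simp add: subset_iff)
  have "fst (lab S0 y) = b"
    using arc cancelling_arc_lab[OF arc] unfolding cancelling_arc_def by simp
  then have "w \<noteq> [] \<longrightarrow> y \<noteq> einv S0 (last w)"
    using w_inv[of "last w"] by auto
  moreover have "hd (w @ [y]) \<noteq> einv S0 x"
    using ne wf_lgraphD(3)[OF wf0 edges(1)] x_inv unmarked by (cases w) auto
  ultimately show ?thesis
    using imm by (simp add: immersed_Cons immersed_snoc)
qed

lemma cancelling_arc_innermost_pair:
  assumes arc: "cancelling_arc b x w y" and marked: "\<exists>e\<in>set w. fst (lab S0 e) = b"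
  obtains A e M e' D where "w = A @ e # M @ e' # D" "fst (lab S0 e) = b"
    "snd g e' = einv S1 (snd g e)" "reduce S1 [] (map (snd g) M) = []"
    "reduce S1 [] (map (snd g) (A @ D)) = []"
proof -
  let ?P = "\<lambda>a. fst (lab S1 a) = b"
  have w: "set w \<subseteq> edges S0"
    using cancelling_arc_edges[OF arc] by simp
  obtain e where "e \<in> set w" "fst (lab S0 e) = b"
    using marked ..
  then have marked_image: "\<exists>a\<in>set (map (snd g) w). ?P a"
    using w strict_morphism_edgeD(4)[OF morph] by force
  obtain A' a M' D' where split: "map (snd g) w = A' @ a # M' @ einv S1 a # D'" and "?P a"
    and M': "reduce S1 [] M' = []" and AD': "reduce S1 [] (A' @ D') = []"
  proof (rule innermost_cancelling_pair[where P = ?P, OF wf1 _ _ _ marked_image])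
    show "set (map (snd g) w) \<subseteq> edges S1"
      using w strict_morphism_edgeD(1)[OF morph] by auto
    show "reduce S1 [] (map (snd g) w) = []"
      using arc by (simp add: cancelling_arc_def)
    show "?P (einv S1 a) = ?P a" if "a \<in> edges S1" for a
      using wf_lgraphD(5)[OF wf1 that] by simp
  qed
  obtain A e M e' D where w_split: "w = A @ e # M @ e' # D" and A: "map (snd g) A = A'"
    and ge: "snd g e = a" and M: "map (snd g) M = M'" and ge': "snd g e' = einv S1 a"
    and D: "map (snd g) D = D'"
    using map_eq_append_Cons_append_ConsE[OF split] .
  have "e \<in> edges S0"
    using w w_split by simp
  then have "fst (lab S0 e) = b"
    using \<open>?P a\<close> ge strict_morphism_edgeD(4)[OF morph] by metis
  then show thesis
    using that[OF w_split] ge ge' M M' A D AD' by simp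
qed

text \<open>A backtrack in the interior can be removed; otherwise an innermost cancelling pair of
  \<open>b\<^sup>\<plusminus>\<^sup>1\<close>-letters in the image of the interior bounds either a shorter cancelling arc or a loop
  that can be cut out.\<close>

lemma cancelling_arc_shorten:
  assumes arc: "cancelling_arc b x w y" and ne: "x \<noteq> einv S0 y"
    and "\<not> immersed S0 w \<or> (\<exists>e\<in>set w. fst (lab S0 e) = b)"
  shows "\<exists>x' w' y'. cancelling_arc b x' w' y' \<and> x' \<noteq> einv S0 y' \<and> length w' < length w"
proof (cases "immersed S0 w")
  case False
  then obtain A e C where "w = A @ [e, einv S0 e] @ C"
    by (rule not_immersed_backtrack)
  then have "cancelling_arc b x (A @ C) y" "length (A @ C) < length w"
    using cancelling_arc_drop_backtrack arc by simp_all
  then show ?thesis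
    using ne by blast
next
  case True
  with assms(3) obtain A e M e' D where w_split: "w = A @ e # M @ e' # D" and "fst (lab S0 e) = b"
    and ge': "snd g e' = einv S1 (snd g e)" and M: "reduce S1 [] (map (snd g) M) = []"
    and AD: "reduce S1 [] (map (snd g) (A @ D)) = []"
    using cancelling_arc_innermost_pair[OF arc] by blast
  show ?thesis
  proof (cases "e = einv S0 e'")
    case False
    have "cancelling_arc b e M e'"
      using cancelling_arc_inner arc w_split \<open>fst (lab S0 e) = b\<close> ge' M by simp
    then show ?thesis
      using False w_split by (intro exI[of _ e] exI[of _ M] exI[of _ e']) simp
  next
    case True
    have "e' \<in> edges S0"
      using cancelling_arc_edges[OF arc] w_split by simp
    then have "w = A @ (e # M @ [einv S0 e]) @ D"
      using w_split True wf_lgraphD(3)[OF wf0] by simp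
    then have "cancelling_arc b x (A @ D) y"
      using cancelling_arc_drop_loop[of b x A e M D y] arc AD by simp
    then show ?thesis
      using ne w_split by (intro exI[of _ x] exI[of _ "A @ D"] exI[of _ y]) simp
  qed
qed

theorem shortest_cancelling_arc:
  assumes "cancelling_arc b x w y" "x \<noteq> einv S0 y"
  shows "\<exists>x' w' y'. cancelling_arc b x' w' y' \<and> immersed S0 (x' # w' @ [y']) \<and>
    (\<forall>e\<in>set w'. fst (lab S0 e) \<noteq> b)"
  using assms
proof (induction "length w" arbitrary: x w y rule: less_induct)
  case less
  show ?case
  proof (cases "immersed S0 w \<and> (\<forall>e\<in>set w. fst (lab S0 e) \<noteq> b)")
    case True
    then show ?thesis
      using cancelling_arc_immersed less.prems by blast
  next
    case False
    then show ?thesis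
      using cancelling_arc_shorten[OF less.prems] less.hyps by blast
  qed
qed

lemma b_edges_collision:
  assumes "card_less (b_edges S1 b) (b_edges S0 b)"
  obtains e e' where "e \<in> edges S0" "e' \<in> edges S0" "lab S0 e = (b, True)" "lab S0 e' = (b, True)"
    "e \<noteq> e'" "snd g e = snd g e'"
proof -
  have "snd g ` b_edges S0 b \<subseteq> b_edges S1 b"
    using strict_morphism_edgeD[OF morph] by (auto simp: b_edges_def)
  then have "\<not> inj_on (snd g) (b_edges S0 b)"
    using assms unfolding card_less_def by blast
  then show thesis
    using that unfolding inj_on_def b_edges_def by blast
qed

text \<open>For paths \<open>r\<close> from \<open>v0\<close> to \<open>u\<close> and \<open>p\<close> from \<open>u\<close> to \<open>u'\<close>, \<open>\<pi>\<^sub>1\<close>-surjectivity provides a loop \<open>c\<close>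
  at \<open>v0\<close> whose image is homotopic to that of \<open>r p r\<inverse>\<close>; then \<open>r\<inverse> c\<inverse> r p\<close> has null-homotopic image.\<close>

lemma null_homotopic_image_path:
  assumes conn: "connected_lg S0" and v0: "v0 \<in> verts S0" and pi: "pi1_surjective S0 S1 g v0"
    and u: "u \<in> verts S0" and u': "u' \<in> verts S0" and same_image: "fst g u' = fst g u"
  obtains w where "is_path S0 u w u'" "reduce S1 [] (map (snd g) w) = []"
proof -
  let ?G = "map (snd g)"
  obtain r where r: "is_path S0 v0 r u"
    using conn v0 u unfolding connected_lg_def by blast
  obtain p where p: "is_path S0 u p u'"
    using conn u u' unfolding connected_lg_def by blast
  have gr: "is_path S1 (fst g v0) (?G r) (fst g u)"
    using strict_morphism_is_path[OF wf0 morph r] .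
  have "is_path S1 (fst g u) (?G p) (fst g u)"
    using strict_morphism_is_path[OF wf0 morph p] same_image by simp
  then have "is_path S1 (fst g v0) (?G r @ ?G p @ rev_path S1 (?G r)) (fst g v0)"
    using gr is_path_rev_path[OF wf1 gr] is_path_append[OF wf1] by blast
  then obtain c where c: "is_path S0 v0 c v0"
    and h: "homotopic S1 (?G c) (?G r @ ?G p @ rev_path S1 (?G r))"
    using pi unfolding pi1_surjective_def by blast
  define w where "w = rev_path S0 r @ rev_path S0 c @ r @ p"
  have "is_path S0 u w u'"
    unfolding w_def using is_path_rev_path[OF wf0 r] is_path_rev_path[OF wf0 c] r p
    by (auto simp: is_path_append[OF wf0])
  moreover have "reduce S1 [] (?G w) = []"
  proof -
    have edges: "set r \<subseteq> edges S0" "set c \<subseteq> edges S0" "set p \<subseteq> edges S0"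
      using r c p by (auto dest: is_path_in_edges)
    then have "set (?G r) \<subseteq> edges S1" "set (?G c) \<subseteq> edges S1" "set (?G p) \<subseteq> edges S1"
      using strict_morphism_edgeD(1)[OF morph] by auto
    then show ?thesis
      using homotopic_conjugate_reduce_Nil[OF wf1 _ _ _ h] strict_morphism_rev_path[OF morph] edges
      unfolding w_def by simp
  qed
  ultimately show thesis
    using that by blast
qed

theorem exists_cancelling_arc:
  assumes conn: "connected_lg S0" and v0: "v0 \<in> verts S0" and pi: "pi1_surjective S0 S1 g v0"
    and fewer: "card_less (b_edges S1 b) (b_edges S0 b)"
  shows "\<exists>x w y. cancelling_arc b x w y \<and> x \<noteq> einv S0 y"
proof -
  obtain e e' where e: "e \<in> edges S0" "lab S0 e = (b, True)" and e': "e' \<in> edges S0"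
    and "e \<noteq> e'" and ge: "snd g e = snd g e'"
    using b_edges_collision[OF fewer] by blast
  have "fst g (tgt S0 e') = fst g (tgt S0 e)"
    using strict_morphism_tgt[OF wf0 morph] e(1) e' ge by metis
  then obtain w where w: "is_path S0 (tgt S0 e) w (tgt S0 e')"
    and null: "reduce S1 [] (map (snd g) w) = []"
    using null_homotopic_image_path[OF conn v0 pi] tgt_in_verts[OF wf0] e(1) e' by metis
  have "is_path S0 (tgt S0 e') [einv S0 e'] (src S0 e')"
    using wf_lgraphD[OF wf0 e'] by (simp add: tgt_def)
  then have "is_path S0 (src S0 e) (e # w @ [einv S0 e']) (src S0 e')"
    using w e(1) by (auto simp: is_path_append[OF wf0])
  moreover have "snd g (einv S0 e') = einv S1 (snd g e)"
    using strict_morphism_edgeD(3)[OF morph e'] ge by simp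
  moreover have "fst (lab S0 e) = b"
    using e(2) by simp
  ultimately have "cancelling_arc b e w (einv S0 e')"
    using null unfolding cancelling_arc_def by blast
  moreover have "e \<noteq> einv S0 (einv S0 e')"
    using wf_lgraphD(3)[OF wf0 e'] \<open>e \<noteq> e'\<close> by simp
  ultimately show ?thesis
    by blast
qed

lemma immersed_cancelling_arc_edge_path:
  assumes arc: "cancelling_arc b x w y" and imm: "immersed S0 (x # w @ [y])"
    and unmarked: "\<forall>e\<in>set w. fst (lab S0 e) \<noteq> b" and p: "is_path S0 u (x # w @ [y]) v"
  defines "P \<equiv> x # w @ [y]" and "m \<equiv> Suc (length w)"
  shows "strict_morphism (interval_graph m (\<lambda>k. lab S0 (P ! k))) S0 (path_map S0 u P)"
    and "immersed S0 (map (\<lambda>i. snd (path_map S0 u P) (i, True)) [0..<Suc m])"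
    and "lab S0 (snd (path_map S0 u P) (0, True)) = lab S0 x"
    and "lab S0 (einv S0 (snd (path_map S0 u P) (m, True))) = lab S0 x"
    and "\<forall>i. 0 < i \<and> i < m \<longrightarrow> fst (lab S0 (snd (path_map S0 u P) (i, True))) \<noteq> b"
proof -
  have mP: "Suc m = length P"
    by (simp add: m_def P_def)
  show "strict_morphism (interval_graph m (\<lambda>k. lab S0 (P ! k))) S0 (path_map S0 u P)"
    using path_map_strict_morphism[OF wf0 p[folded P_def] mP] by simp
  have "map (\<lambda>i. snd (path_map S0 u P) (i, True)) [0..<Suc m] = P"
    by (simp add: path_map_def mP map_nth)
  then show "immersed S0 (map (\<lambda>i. snd (path_map S0 u P) (i, True)) [0..<Suc m])"
    using imm by (simp add: P_def)
  show "lab S0 (snd (path_map S0 u P) (0, True)) = lab S0 x"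
    by (simp add: path_map_def P_def)
  show "lab S0 (einv S0 (snd (path_map S0 u P) (m, True))) = lab S0 x"
    using cancelling_arc_lab[OF arc] cancelling_arc_edges[OF arc] wf_lgraphD(5)[OF wf0]
    by (simp add: path_map_def P_def m_def nth_append)
  show "\<forall>i. 0 < i \<and> i < m \<longrightarrow> fst (lab S0 (snd (path_map S0 u P) (i, True))) \<noteq> b"
    using unmarked by (auto simp: path_map_def P_def m_def nth_append nth_Cons split: nat.splits)
qed

text \<open>The image of a cancelling arc folds up in a tree: lifting it to the universal cover of \<open>S1\<close>,
  the lifts of its first edge and of its inverted last edge coincide.\<close>

lemma cancelling_arc_factors_through_tree:
  assumes arc: "cancelling_arc b x w y" and p: "is_path S0 u (x # w @ [y]) v"
  defines "P \<equiv> x # w @ [y]" and "m \<equiv> Suc (length w)"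
  shows "\<exists>(T :: (nat, nat, 'b) lgraph) g' h. is_tree T \<and>
    strict_morphism (interval_graph m (\<lambda>k. lab S0 (P ! k))) T g' \<and> strict_morphism T S1 h \<and>
    (\<forall>z\<in>verts (interval_graph m (\<lambda>k. lab S0 (P ! k))).
      fst g (fst (path_map S0 u P) z) = fst h (fst g' z)) \<and>
    (\<forall>e\<in>edges (interval_graph m (\<lambda>k. lab S0 (P ! k))).
      snd g (snd (path_map S0 u P) e) = snd h (snd g' e)) \<and>
    snd g' (0, True) = snd g' (m, False)"
proof -
  have mP: "Suc m = length P"
    by (simp add: m_def P_def)
  have P_edges: "set P \<subseteq> edges S0"
    using is_path_in_edges[OF p] by (simp add: P_def)
  have image: "map (snd g) P = snd g x # map (snd g) w @ [einv S1 (snd g x)]"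
    and null: "reduce S1 [] (map (snd g) w) = []"
    using arc by (simp_all add: P_def cancelling_arc_def)
  have labels: "\<forall>k\<le>m. lab S0 (P ! k) = lab S1 (map (snd g) P ! k)"
    using P_edges mP strict_morphism_edgeD(4)[OF morph] by (auto simp: le_simps(2)[symmetric] subset_iff)
  obtain T :: "(nat, nat, 'b) lgraph" and g' h where "is_tree T"
    "strict_morphism (interval_graph m (\<lambda>k. lab S0 (P ! k))) T g'" "strict_morphism T S1 h"
    "\<forall>z\<in>verts (interval_graph m (\<lambda>k. lab S0 (P ! k))).
      fst h (fst g' z) = fst (path_map S1 (fst g u) (map (snd g) P)) z"
    "\<forall>e\<in>edges (interval_graph m (\<lambda>k. lab S0 (P ! k))).
      snd h (snd g' e) = snd (path_map S1 (fst g u) (map (snd g) P)) e"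
    "snd g' (0, True) = snd g' (m, False)"
    using path_factors_through_tree[OF wf1 strict_morphism_is_path[OF wf0 morph p[folded P_def]]
        _ labels image null] mP by auto
  then show ?thesis
    using strict_morphism_path_map[OF wf0 morph p[folded P_def] mP] by (intro exI) auto
qed

end

theorem lemma9p6:
  fixes S0 :: "('v0, 'e0, 'b::finite) lgraph"
    and S1 :: "('v1, 'e1, 'b) lgraph"
    and g :: "('v0 \<Rightarrow> 'v1) \<times> ('e0 \<Rightarrow> 'e1)"
    and v0 :: 'v0 and b :: 'b
  assumes "wf_lgraph S0" and "wf_lgraph S1"
    and "connected_lg S0" and "connected_lg S1"
    and "strict_morphism S0 S1 g"
    and "v0 \<in> verts S0" and "pi1_surjective S0 S1 g v0"
    and "card_less (b_edges S1 b) (b_edges S0 b)"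
  shows "\<exists>m L \<sigma> (T :: (nat, nat, 'b) lgraph) g' h b'.
           strict_morphism (interval_graph m L) S0 \<sigma> \<and>
           immersed S0 (map (\<lambda>i. snd \<sigma> (i, True)) [0..<Suc m]) \<and>
           is_tree T \<and>
           strict_morphism (interval_graph m L) T g' \<and>
           strict_morphism T S1 h \<and>
           (\<forall>x \<in> verts (interval_graph m L). fst g (fst \<sigma> x) = fst h (fst g' x)) \<and>
           (\<forall>x \<in> edges (interval_graph m L). snd g (snd \<sigma> x) = snd h (snd g' x)) \<and>
           fst b' = b \<and>
           lab S0 (snd \<sigma> (0, True)) = b' \<and>
           lab S0 (einv S0 (snd \<sigma> (m, True))) = b' \<and>
           (\<forall>i. 0 < i \<and> i < m \<longrightarrow> fst (lab S0 (snd \<sigma> (i, True))) \<noteq> b) \<and>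
           snd g' (0, True) = snd g' (m, False)"
proof -
  interpret lgraph_morphism S0 S1 g
    using assms(1,2,5) by unfold_locales
  obtain x w y where arc: "cancelling_arc b x w y" and imm: "immersed S0 (x # w @ [y])"
    and unmarked: "\<forall>e\<in>set w. fst (lab S0 e) \<noteq> b"
    using exists_cancelling_arc[OF assms(3,6,7,8)] shortest_cancelling_arc by blast
  obtain u v where p: "is_path S0 u (x # w @ [y]) v"
    using arc unfolding cancelling_arc_def by blast
  have "fst (lab S0 x) = b"
    using arc by (simp add: cancelling_arc_def)
  then show ?thesis
    using immersed_cancelling_arc_edge_path[OF arc imm unmarked p]
      cancelling_arc_factors_through_tree[OF arc p]
    by (intro exI[of _ "Suc (length w)"] exI[of _ "\<lambda>k. lab S0 ((x # w @ [y]) ! k)"]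
        exI[of _ "path_map S0 u (x # w @ [y])"]) blast
qed

end
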